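(* Let $n$ be a positive integer and let $\mathcal F$ be an $\mathcal N$-saturated family of subsets of $[n]$. Let $\mathcal G$ be a component of $\mathcal F$. If $T$ is a maximal element of $\mathcal G$ and $S$ is a minimal element of $\mathcal G$ (with respect to inclusion), then $S\subseteq T$.
   Context: The poset $\mathcal N$ has four elements $a,b,c,d$ with $a<c$, $b<c$, $b<d$ and no other comparabilities (so $a,b$ are its minimal elements, $c,d$ its maximal elements; $c$ is the unique maximal element comparable to both minimal elements and $b$ the unique minimal element comparable to both maximal elements). A family $\mathcal Q$ of sets (ordered by inclusion) contains an induced copy of $\mathcal N$ if there are distinct sets in $\mathcal Q$ whose inclusion relations are exactly those of $a,b,c,d$ above. A family $\mathcal F$ of subsets of $[n]=\{1,\dots,n\}$ is $\mathcal N$-saturated if $\mathcal F$ contains no induced copy of $\mathcal N$, but for every $S\subseteq[n]$ with $S\notin\mathcal F$, the family $\mathcal F\cup\{S\}$ contains an induced copy of $\mathcal N$. A component of $\mathcal F$ is the vertex set of a connected component of the Hasse diagram (as a graph) of the poset $(\mathcal F\setminus\{\emptyset,[n]\},\subseteq)$. *)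

theory Defs
  imports Main
begin

definition has_induced_N :: "'a set set \<Rightarrow> bool" where
  "has_induced_N Q \<longleftrightarrow> (\<exists>a\<in>Q. \<exists>b\<in>Q. \<exists>c\<in>Q. \<exists>d\<in>Q.
     distinct [a, b, c, d] \<and>
     a \<subseteq> c \<and> b \<subseteq> c \<and> b \<subseteq> d \<and>
     \<not> a \<subseteq> b \<and> \<not> b \<subseteq> a \<and>
     \<not> a \<subseteq> d \<and> \<not> d \<subseteq> a \<and>
     \<not> c \<subseteq> d \<and> \<not> d \<subseteq> c \<and>
     \<not> c \<subseteq> a \<and> \<not> c \<subseteq> b \<and> \<not> d \<subseteq> b)"

definition N_saturated :: "nat \<Rightarrow> nat set set \<Rightarrow> bool" where
  "N_saturated n F \<longleftrightarrow> F \<subseteq> Pow {1..n} \<and> \<not> has_induced_N F \<and>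
     (\<forall>S. S \<subseteq> {1..n} \<longrightarrow> S \<notin> F \<longrightarrow> has_induced_N (insert S F))"

definition inner_family :: "nat \<Rightarrow> nat set set \<Rightarrow> nat set set" where
  "inner_family n F = F - {{}, {1..n}}"

definition covers :: "'a set set \<Rightarrow> 'a set \<Rightarrow> 'a set \<Rightarrow> bool" where
  "covers P x y \<longleftrightarrow> x \<in> P \<and> y \<in> P \<and> x \<subset> y \<and> \<not> (\<exists>z\<in>P. x \<subset> z \<and> z \<subset> y)"

definition hasse_adj :: "'a set set \<Rightarrow> 'a set \<Rightarrow> 'a set \<Rightarrow> bool" where
  "hasse_adj P x y \<longleftrightarrow> covers P x y \<or> covers P y x"

definition is_component_of :: "'a set set \<Rightarrow> 'a set set \<Rightarrow> bool" where
  "is_component_of G P \<longleftrightarrow> (\<exists>x\<in>P. G = {y \<in> P. (hasse_adj P)\<^sup>*\<^sup>* x y})"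

definition component :: "nat \<Rightarrow> nat set set \<Rightarrow> nat set set \<Rightarrow> bool" where
  "component n F G \<longleftrightarrow> is_component_of G (inner_family n F)"

definition is_maximal_in :: "'a set set \<Rightarrow> 'a set \<Rightarrow> bool" where
  "is_maximal_in G T \<longleftrightarrow> T \<in> G \<and> \<not> (\<exists>U\<in>G. T \<subset> U)"

definition is_minimal_in :: "'a set set \<Rightarrow> 'a set \<Rightarrow> bool" where
  "is_minimal_in G S \<longleftrightarrow> S \<in> G \<and> \<not> (\<exists>U\<in>G. U \<subset> S)"

end

theory Submission
  imports Defs
begin

text \<open>Walk along the Hasse diagram from S to T and keep the invariant that every maximal
element of the family lying above the current vertex y contains S. At a downward step to z \<subset> y, pick a maximal t' \<supseteq> y (so S \<subseteq> t') and a minimal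
s' \<subseteq> z; for a maximal t \<supseteq> z the minimal S, s' and the maximal t', t would form an induced
copy of N unless S \<subseteq> t. Minimal and maximal elements of a component are extremal in the
whole family, since a strict superset or subset would yield a Hasse edge leaving the component.\<close>

lemma has_induced_N_mono:
  assumes "Q \<subseteq> R" "has_induced_N Q"
  shows "has_induced_N R"
  using assms unfolding has_induced_N_def by (meson subsetD)

lemma N_free_minimal_maximal:
  assumes "\<not> has_induced_N P"
    and "is_minimal_in P a" "is_minimal_in P b" "is_maximal_in P c" "is_maximal_in P d"
    and "a \<subseteq> c" "b \<subseteq> c" "b \<subseteq> d"
  shows "a \<subseteq> d"
proof (rule ccontr)
  assume "\<not> a \<subseteq> d"
  have P: "a \<in> P" "b \<in> P" "c \<in> P" "d \<in> P"
    using assms(2-5) unfolding is_minimal_in_def is_maximal_in_def by auto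
  have below_minimal: "\<And>u. u \<in> P \<Longrightarrow> u \<subseteq> a \<Longrightarrow> u = a" "\<And>u. u \<in> P \<Longrightarrow> u \<subseteq> b \<Longrightarrow> u = b"
    and above_maximal: "\<And>u. u \<in> P \<Longrightarrow> c \<subseteq> u \<Longrightarrow> u = c" "\<And>u. u \<in> P \<Longrightarrow> d \<subseteq> u \<Longrightarrow> u = d"
    using assms(2-5) unfolding is_minimal_in_def is_maximal_in_def by (auto simp: psubset_eq)
  have "a \<noteq> b" "c \<noteq> d" using \<open>\<not> a \<subseteq> d\<close> assms(6,8) by auto
  then have "\<not> a \<subseteq> b" "\<not> b \<subseteq> a" "\<not> c \<subseteq> d" "\<not> d \<subseteq> c"
    using P below_minimal above_maximal by metis+
  moreover from this have "\<not> c \<subseteq> a" "\<not> c \<subseteq> b" "\<not> d \<subseteq> a" "\<not> d \<subseteq> b"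
    using P below_minimal assms(6-8) by blast+
  ultimately have "has_induced_N P"
    unfolding has_induced_N_def using P \<open>\<not> a \<subseteq> d\<close> assms(6-8)
    by (intro bexI[of _ a] bexI[of _ b] bexI[of _ c] bexI[of _ d]) auto
  with assms(1) show False ..
qed

lemma finite_exists_maximal_above:
  assumes "finite P" "y \<in> P"
  obtains t where "is_maximal_in P t" "y \<subseteq> t"
proof -
  obtain t where "t \<in> P" "y \<subseteq> t" "\<forall>u\<in>P. t \<subseteq> u \<longrightarrow> t = u"
    using finite_has_maximal2[OF assms] by blast
  then have "is_maximal_in P t" unfolding is_maximal_in_def by auto
  with \<open>y \<subseteq> t\<close> that show thesis by blast
qed

lemma finite_exists_minimal_below:
  assumes "finite P" "y \<in> P"
  obtains s where "is_minimal_in P s" "s \<subseteq> y"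
proof -
  obtain s where "s \<in> P" "s \<subseteq> y" "\<forall>u\<in>P. u \<subseteq> s \<longrightarrow> s = u"
    using finite_has_minimal2[OF assms] by blast
  then have "is_minimal_in P s" unfolding is_minimal_in_def by auto
  with \<open>s \<subseteq> y\<close> that show thesis by blast
qed

lemma finite_exists_cover_above:
  assumes "finite P" "x \<in> P" "u \<in> P" "x \<subset> u"
  obtains v where "covers P x v"
proof -
  have "finite {w \<in> P. x \<subset> w}" "u \<in> {w \<in> P. x \<subset> w}" using assms by auto
  then obtain v where "is_minimal_in {w \<in> P. x \<subset> w} v"
    by (blast elim: finite_exists_minimal_below)
  then have "covers P x v"
    unfolding is_minimal_in_def covers_def using assms(2) by auto
  then show thesis ..
qed

lemma finite_exists_cover_below:
  assumes "finite P" "x \<in> P" "u \<in> P" "u \<subset> x"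
  obtains v where "covers P v x"
proof -
  have "finite {w \<in> P. w \<subset> x}" "u \<in> {w \<in> P. w \<subset> x}" using assms by auto
  then obtain v where "is_maximal_in {w \<in> P. w \<subset> x} v"
    by (blast elim: finite_exists_maximal_above)
  then have "covers P v x"
    unfolding is_maximal_in_def covers_def using assms(2) by auto
  then show thesis ..
qed

lemma symp_hasse_adj: "symp (hasse_adj P)"
  unfolding hasse_adj_def by (auto intro: sympI)

lemma component_subset:
  "is_component_of G P \<Longrightarrow> G \<subseteq> P"
  unfolding is_component_of_def by auto

lemma component_closed:
  assumes "is_component_of G P" "x \<in> G" "hasse_adj P x y"
  shows "y \<in> G"
  using assms unfolding is_component_of_def hasse_adj_def covers_def
  by (auto intro: rtranclp.rtrancl_into_rtrancl)

lemma component_connected: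
  assumes "is_component_of G P" "x \<in> G" "y \<in> G"
  shows "(hasse_adj P)\<^sup>*\<^sup>* x y"
proof -
  obtain r where "(hasse_adj P)\<^sup>*\<^sup>* r x" "(hasse_adj P)\<^sup>*\<^sup>* r y"
    using assms unfolding is_component_of_def by auto
  then show ?thesis
    using sympD[OF symp_rtranclp[OF symp_hasse_adj]] by (meson rtranclp_trans)
qed

lemma maximal_in_component_imp_maximal:
  assumes "finite P" "is_component_of G P" "is_maximal_in G t"
  shows "is_maximal_in P t"
proof -
  have "t \<in> P" using assms component_subset unfolding is_maximal_in_def by blast
  moreover have "\<not> t \<subset> u" if "u \<in> P" for u
  proof
    assume "t \<subset> u"
    then obtain v where "covers P t v"
      using finite_exists_cover_above \<open>t \<in> P\<close> \<open>u \<in> P\<close> assms(1) by blast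
    then have "v \<in> G" "t \<subset> v"
      using component_closed[OF assms(2)] assms(3)
      unfolding is_maximal_in_def hasse_adj_def covers_def by auto
    with assms(3) show False unfolding is_maximal_in_def by blast
  qed
  ultimately show ?thesis unfolding is_maximal_in_def by blast
qed

lemma minimal_in_component_imp_minimal:
  assumes "finite P" "is_component_of G P" "is_minimal_in G s"
  shows "is_minimal_in P s"
proof -
  have "s \<in> P" using assms component_subset unfolding is_minimal_in_def by blast
  moreover have "\<not> u \<subset> s" if "u \<in> P" for u
  proof
    assume "u \<subset> s"
    then obtain v where "covers P v s"
      using finite_exists_cover_below \<open>s \<in> P\<close> \<open>u \<in> P\<close> assms(1) by blast
    then have "v \<in> G" "v \<subset> s"
      using component_closed[OF assms(2)] assms(3)
      unfolding is_minimal_in_def hasse_adj_def covers_def by auto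
    with assms(3) show False unfolding is_minimal_in_def by blast
  qed
  ultimately show ?thesis unfolding is_minimal_in_def by blast
qed

lemma N_free_maximal_above_path_contains_start:
  assumes "finite P" "\<not> has_induced_N P" "is_minimal_in P s"
    and "(hasse_adj P)\<^sup>*\<^sup>* s y" "is_maximal_in P t" "y \<subseteq> t"
  shows "s \<subseteq> t"
  using assms(4-6)
proof (induction y arbitrary: t rule: rtranclp_induct)
  case base
  then show ?case by simp
next
  case (step y z)
  show ?case
  proof (cases "covers P y z")
    case True
    then show ?thesis using step unfolding covers_def by blast
  next
    case False
    with step.hyps(2) have "covers P z y" unfolding hasse_adj_def by blast
    then have "y \<in> P" "z \<in> P" "z \<subset> y" unfolding covers_def by auto
    obtain t' where t': "is_maximal_in P t'" "y \<subseteq> t'"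
      using finite_exists_maximal_above[OF assms(1) \<open>y \<in> P\<close>] .
    obtain s' where s': "is_minimal_in P s'" "s' \<subseteq> z"
      using finite_exists_minimal_below[OF assms(1) \<open>z \<in> P\<close>] .
    have "s \<subseteq> t'" using step.IH t' by blast
    moreover have "s' \<subseteq> t'" "s' \<subseteq> t" using s'(2) t'(2) \<open>z \<subset> y\<close> step.prems(2) by auto
    ultimately show ?thesis
      using N_free_minimal_maximal[OF assms(2,3) s'(1) t'(1) step.prems(1)] by blast
  qed
qed

lemma N_saturated_inner_finite: "N_saturated n F \<Longrightarrow> finite (inner_family n F)"
  unfolding N_saturated_def inner_family_def by (metis finite_Diff finite_Pow_iff finite_atLeastAtMost finite_subset)

lemma N_saturated_inner_N_free: "N_saturated n F \<Longrightarrow> \<not> has_induced_N (inner_family n F)"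
  unfolding N_saturated_def inner_family_def by (meson Diff_subset has_induced_N_mono)

theorem lemma2p1:
  fixes n :: nat and F G :: "nat set set" and S T :: "nat set"
  assumes "n \<ge> 1"
    and "N_saturated n F"
    and "component n F G"
    and "is_maximal_in G T"
    and "is_minimal_in G S"
  shows "S \<subseteq> T"
proof -
  let ?P = "inner_family n F"
  have fin: "finite ?P" and N_free: "\<not> has_induced_N ?P"
    using assms(2) N_saturated_inner_finite N_saturated_inner_N_free by auto
  have comp: "is_component_of G ?P" using assms(3) unfolding component_def .
  have "is_maximal_in ?P T" "is_minimal_in ?P S"
    using maximal_in_component_imp_maximal[OF fin comp assms(4)]
      minimal_in_component_imp_minimal[OF fin comp assms(5)] .
  moreover have "(hasse_adj ?P)\<^sup>*\<^sup>* S T"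
    using component_connected[OF comp] assms(4,5) unfolding is_maximal_in_def is_minimal_in_def by blast
  ultimately show ?thesis
    using N_free_maximal_above_path_contains_start[OF fin N_free] by blast
qed

end
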